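(* Let $r>0$, $\varepsilon_0>0$, let $n\ge 1$ be an integer, and let $\varphi_0$ be an axially symmetric external potential, harmonic inside the ball of radius $r$ centered at the origin, whose values on the axis are a polynomial of degree $n$: \[ -\varphi_0(s)=\sum_{i=1}^{n+1} b_i s^{i-1}. \] Let $\sigma$ be the polynomial of degree at most $n$ on $[-r,r]$ satisfying \[ \int_{-r}^{r}\frac{r\,\sigma(z)}{\sqrt{s^2+r^2-2sz}}\,dz=-2\varepsilon_0\,\varphi_0(s)\qquad(-r<s<r). \] Then the force acting on the ball, $\mathcal F=\frac{\pi}{\varepsilon_0}\int_{-r}^{r}z\,\sigma(z)^2\,dz$, is \[ \mathcal F=4\pi\varepsilon_0\sum_{i=1}^{n} i\,r^{2i-1}\,b_i\,b_{i+1}. \]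
   Context: Physical setting: a grounded conducting ball of radius $r$ centered at the origin on the axis of an axially symmetric external field with potential $\varphi_0$; $\varepsilon_0$ is the electric constant; $\sigma(z)$ is the induced surface charge density as a function of the axial coordinate $z$. The force expression comes from the electric pressure $p=-\sigma^2/(2\varepsilon_0)$ integrated over the sphere. *)

theory Defs
  imports "HOL-Analysis.Analysis" "HOL-Computational_Algebra.Polynomial"
begin

text \<open>Force on the grounded ball, from the pressure -sig^2/(2 eps0) integrated over the sphere.\<close>
definition ball_force :: "real \<Rightarrow> real \<Rightarrow> (real \<Rightarrow> real) \<Rightarrow> real" where
  "ball_force r eps0 sig = pi / eps0 * integral {-r..r} (\<lambda>z. z * (sig z)^2)"

end

(*
  Rescale the ball to radius 1 and expand the rescaled density tau(x) = sig(r x) in Legendre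
  polynomials, tau = (SUM l. c l * P l).  The potential on the axis of the charge P l on the unit
  sphere is proportional to 2 t^l / (2 l + 1), so the integral equation becomes an identity between
  polynomials in t and yields c l = (2 l + 1) eps0 r^(l - 1) b (l + 1).  The force is
  pi / eps0 * r^2 times the integral of x tau(x)^2 over [-1, 1]; by x P l = ((l + 1) P (l + 1) +
  l P (l - 1)) / (2 l + 1) and orthogonality, only products c l * c (l + 1) of neighbouring
  coefficients survive, with weight 4 (l + 1) / ((2 l + 1) (2 l + 3)).
*)

theory Submission
  imports Defs
begin

fun legendre :: "nat \<Rightarrow> real poly" where
  "legendre 0 = 1"
| "legendre (Suc 0) = [:0, 1:]"
| "legendre (Suc (Suc n)) = smult (1 / (real n + 2))
      (smult (2 * real n + 3) (pCons 0 (legendre (Suc n))) - smult (real n + 1) (legendre n))"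

lemma legendre_rec:
  "(real n + 2) * poly (legendre (Suc (Suc n))) x
     = (2 * real n + 3) * x * poly (legendre (Suc n)) x - (real n + 1) * poly (legendre n) x"
  by (simp add: field_simps)

lemma pderiv_legendre_rec:
  "(real n + 2) * poly (pderiv (legendre (Suc (Suc n)))) x
     = (2 * real n + 3) * (poly (legendre (Suc n)) x + x * poly (pderiv (legendre (Suc n))) x)
       - (real n + 1) * poly (pderiv (legendre n)) x"
  by (simp add: pderiv_pCons pderiv_smult pderiv_diff field_simps)

declare legendre.simps(3) [simp del]

lemma x_mult_legendre:
  "(2 * real k + 1) * x * poly (legendre k) x
     = real (k + 1) * poly (legendre (k + 1)) x + real k * poly (legendre (k - 1)) x"
proof (cases k)
  case (Suc m)
  then show ?thesis using legendre_rec[of m x] by (simp add: algebra_simps)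
qed simp

lemma poly_legendre_one: "poly (legendre n) 1 = 1"
proof (induction n rule: legendre.induct)
  case (3 n)
  have "(real n + 2) * poly (legendre (Suc (Suc n))) 1 = (real n + 2) * 1"
    using legendre_rec[of n 1] 3 by (simp add: algebra_simps)
  moreover have "real n + 2 \<noteq> 0" by simp
  ultimately show ?case by simp
qed simp_all

lemma poly_legendre_minus_one: "poly (legendre n) (-1) = (-1) ^ n"
proof (induction n rule: legendre.induct)
  case (3 n)
  have "(real n + 2) * poly (legendre (Suc (Suc n))) (-1) = (real n + 2) * (-1) ^ Suc (Suc n)"
    using legendre_rec[of n "-1"] 3 by (simp add: algebra_simps)
  moreover have "real n + 2 \<noteq> 0" by simp
  ultimately show ?case by simp
qed simp_all

lemma pderiv_legendre_identities:
  "poly (pderiv (legendre (Suc n))) x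
     = x * poly (pderiv (legendre n)) x + real (Suc n) * poly (legendre n) x
   \<and> x * poly (pderiv (legendre (Suc n))) x - poly (pderiv (legendre n)) x
     = real (Suc n) * poly (legendre (Suc n)) x
   \<and> (x^2 - 1) * poly (pderiv (legendre (Suc n))) x
     = real (Suc n) * (x * poly (legendre (Suc n)) x - poly (legendre n) x)"
proof (induction n)
  case 0
  then show ?case by (simp add: power2_eq_square pderiv_pCons)
next
  case (Suc n)
  let ?P = "\<lambda>k. poly (legendre k) x" and ?D = "\<lambda>k. poly (pderiv (legendre k)) x"
  have xderiv: "x * ?D (Suc n) - ?D n = real (Suc n) * ?P (Suc n)"
    and sq: "(x^2 - 1) * ?D (Suc n) = real (Suc n) * (x * ?P (Suc n) - ?P n)"
    using Suc.IH by blast+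
  have deriv': "?D (Suc (Suc n)) = x * ?D (Suc n) + real (Suc (Suc n)) * ?P (Suc n)"
  proof -
    have "x * ?D (Suc n) = ?D n + (real n + 1) * ?P (Suc n)"
      using xderiv by (simp add: algebra_simps)
    then have "(real n + 2) * ?D (Suc (Suc n))
        = (real n + 2) * (x * ?D (Suc n) + (real n + 2) * ?P (Suc n))"
      unfolding pderiv_legendre_rec by (simp add: algebra_simps)
    then show ?thesis by simp
  qed
  have xderiv': "x * ?D (Suc (Suc n)) - ?D (Suc n) = real (Suc (Suc n)) * ?P (Suc (Suc n))"
  proof -
    have "x * ?D (Suc (Suc n)) - ?D (Suc n)
        = (x^2 - 1) * ?D (Suc n) + real (Suc (Suc n)) * x * ?P (Suc n)"
      using deriv' by (simp add: algebra_simps power2_eq_square)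
    also have "\<dots> = real (Suc (Suc n)) * ?P (Suc (Suc n))"
      using sq legendre_rec[of n x] by (simp add: algebra_simps)
    finally show ?thesis .
  qed
  have sq': "(x^2 - 1) * ?D (Suc (Suc n))
      = real (Suc (Suc n)) * (x * ?P (Suc (Suc n)) - ?P (Suc n))"
  proof -
    have "(x^2 - 1) * ?D (Suc (Suc n))
        = x * ((x^2 - 1) * ?D (Suc n)) + real (Suc (Suc n)) * (x^2 - 1) * ?P (Suc n)"
      using deriv' by (simp add: algebra_simps)
    also have "\<dots> = x * ((2 * real n + 3) * x * ?P (Suc n) - (real n + 1) * ?P n)
        - real (Suc (Suc n)) * ?P (Suc n)"
      unfolding sq by (simp add: algebra_simps power2_eq_square)
    also have "\<dots> = real (Suc (Suc n)) * (x * ?P (Suc (Suc n)) - ?P (Suc n))"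
      unfolding legendre_rec[symmetric] by (simp add: algebra_simps)
    finally show ?thesis .
  qed
  show ?case using deriv' xderiv' sq' by blast
qed

lemma pderiv_legendre_diff:
  "poly (pderiv (legendre (Suc (Suc n)))) x - poly (pderiv (legendre n)) x
     = (2 * real n + 3) * poly (legendre (Suc n)) x"
proof -
  have "poly (pderiv (legendre (Suc (Suc n)))) x
      = x * poly (pderiv (legendre (Suc n))) x + real (Suc (Suc n)) * poly (legendre (Suc n)) x"
    and "x * poly (pderiv (legendre (Suc n))) x - poly (pderiv (legendre n)) x
      = real (Suc n) * poly (legendre (Suc n)) x"
    using pderiv_legendre_identities[of "Suc n" x] pderiv_legendre_identities[of n x] by blast+
  then show ?thesis by (simp add: algebra_simps)
qed

lemma degree_legendre: "degree (legendre n) = n" "coeff (legendre n) n \<noteq> 0"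
proof -
  have "degree (legendre n) = n \<and> coeff (legendre n) n \<noteq> 0"
  proof (induction n rule: legendre.induct)
    case (3 n)
    let ?p = "smult (2 * real n + 3) (pCons 0 (legendre (Suc n))) - smult (real n + 1) (legendre n)"
    have "degree ?p \<le> Suc (Suc n)"
      using 3 by (intro degree_diff_le) (auto intro: order.trans[OF degree_smult_le])
    moreover have lead: "coeff ?p (Suc (Suc n)) \<noteq> 0"
      using 3 by (simp add: coeff_eq_0)
    ultimately have "degree ?p = Suc (Suc n)"
      using le_degree[of ?p "Suc (Suc n)"] by fastforce
    then show ?case using lead by (simp add: legendre.simps(3))
  qed auto
  then show "degree (legendre n) = n" "coeff (legendre n) n \<noteq> 0" by simp_all
qed

lemma legendre_expansion:
  assumes "degree p \<le> n"
  shows "\<exists>c. p = (\<Sum>l\<le>n. smult (c l) (legendre l))"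
  using assms
proof (induction n arbitrary: p)
  case 0
  then have "p = [:coeff p 0:]" by (metis degree_0_id le_zero_eq)
  then show ?case by (intro exI[of _ "\<lambda>_. coeff p 0"]) simp
next
  case (Suc n)
  define a where "a = coeff p (Suc n) / coeff (legendre (Suc n)) (Suc n)"
  define q where "q = p - smult a (legendre (Suc n))"
  have "degree q \<le> Suc n"
    unfolding q_def using Suc.prems degree_legendre(1)[of "Suc n"]
    by (intro degree_diff_le) (auto intro: order.trans[OF degree_smult_le])
  moreover have "coeff q (Suc n) = 0"
    unfolding q_def a_def using degree_legendre(2)[of "Suc n"] by simp
  ultimately have "degree q \<le> n"
    by (metis le_SucE leading_coeff_0_iff degree_0 le0)
  then obtain c where "q = (\<Sum>l\<le>n. smult (c l) (legendre l))" using Suc.IH by blast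
  then have "p = (\<Sum>l\<le>Suc n. smult ((c(Suc n := a)) l) (legendre l))"
    by (simp add: q_def)
  then show ?case by blast
qed

lemma integral_poly_pderiv:
  fixes a b :: real
  assumes "a \<le> b"
  shows "integral {a..b} (poly (pderiv p)) = poly p b - poly p a"
proof -
  have "(poly p has_real_derivative poly (pderiv p) x) (at x within {a..b})" for x
    by (rule DERIV_subset[OF poly_DERIV]) simp
  then have "(poly (pderiv p) has_integral poly p b - poly p a) {a..b}"
    using assms by (intro fundamental_theorem_of_calculus)
      (simp_all add: has_real_derivative_iff_has_vector_derivative[symmetric])
  then show ?thesis by blast
qed

lemma integral_poly_by_parts:
  fixes a b :: real
  assumes "a \<le> b"
  shows "integral {a..b} (\<lambda>x. poly (pderiv p) x * poly q x)
     = poly p b * poly q b - poly p a * poly q a - integral {a..b} (\<lambda>x. poly p x * poly (pderiv q) x)"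
proof -
  have "integral {a..b} (\<lambda>x. poly (pderiv p) x * poly q x) + integral {a..b} (\<lambda>x. poly p x * poly (pderiv q) x)
      = integral {a..b} (poly (pderiv (p * q)))"
    unfolding pderiv_mult poly_add poly_mult
    by (subst integral_add[symmetric])
      (auto intro!: integrable_continuous_interval continuous_intros simp: algebra_simps)
  also have "\<dots> = poly p b * poly q b - poly p a * poly q a"
    using integral_poly_pderiv[OF assms] by simp
  finally show ?thesis by simp
qed

lemma integral_legendre_orthogonal:
  assumes "degree q < l"
  shows "integral {-1..1} (\<lambda>x. poly (legendre l) x * poly q x) = 0"
  using assms
proof (induction "degree q" arbitrary: q l rule: less_induct)
  case less
  then obtain k where l: "l = Suc k" by (cases l) auto
  define R where "R = legendre (Suc (Suc k)) - legendre k"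
  have R_endpoints: "poly R 1 = 0" "poly R (-1) = 0"
    unfolding R_def by (simp_all add: poly_legendre_one poly_legendre_minus_one)
  have pderiv_R: "poly (pderiv R) x = (2 * real k + 3) * poly (legendre l) x" for x
    unfolding R_def l pderiv_diff poly_diff by (rule pderiv_legendre_diff)
  have "integral {-1..1} (\<lambda>x. poly (pderiv R) x * poly q x)
      = - integral {-1..1} (\<lambda>x. poly R x * poly (pderiv q) x)"
    using integral_poly_by_parts[of "-1" 1 R q] R_endpoints by simp
  also have "\<dots> = 0"
  proof (cases "degree q = 0")
    case True
    then have "pderiv q = 0" by (simp add: pderiv_eq_0_iff)
    then show ?thesis by simp
  next
    case False
    then have "degree (pderiv q) < degree q" "degree (pderiv q) < k"
      using less.prems l by (simp_all add: degree_pderiv)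
    then have "integral {-1..1} (\<lambda>x. poly (legendre (Suc (Suc k))) x * poly (pderiv q) x) = 0"
      and "integral {-1..1} (\<lambda>x. poly (legendre k) x * poly (pderiv q) x) = 0"
      using less.hyps by simp_all
    then show ?thesis
      unfolding R_def poly_diff left_diff_distrib
      by (subst integral_diff) (auto intro!: integrable_continuous_interval continuous_intros)
  qed
  finally have "(2 * real k + 3) * integral {-1..1} (\<lambda>x. poly (legendre l) x * poly q x) = 0"
    unfolding pderiv_R integral_mult_right[symmetric] by (simp add: mult.assoc)
  then show ?case by simp
qed

lemma integral_combination:
  fixes f g :: "real \<Rightarrow> real"
  assumes "continuous_on {a..b} f" "continuous_on {a..b} g"
  shows "integral {a..b} (\<lambda>x. c * f x + d * g x) = c * integral {a..b} f + d * integral {a..b} g"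
  using assms by (subst integral_add) (auto intro!: integrable_continuous_interval continuous_intros)

lemma integral_x_legendre_legendre_rec:
  "(2 * real k + 1) * integral {-1..1} (\<lambda>x. x * poly (legendre k) x * poly (legendre m) x)
     = real (k + 1) * integral {-1..1} (\<lambda>x. poly (legendre (k + 1)) x * poly (legendre m) x)
       + real k * integral {-1..1} (\<lambda>x. poly (legendre (k - 1)) x * poly (legendre m) x)"
proof -
  have "(\<lambda>x. (2 * real k + 1) * (x * poly (legendre k) x * poly (legendre m) x))
      = (\<lambda>x. real (k + 1) * (poly (legendre (k + 1)) x * poly (legendre m) x)
           + real k * (poly (legendre (k - 1)) x * poly (legendre m) x))"
    using x_mult_legendre[of k] by (intro ext) (metis (no_types) distrib_right mult.assoc)
  then show ?thesis
    by (simp only: integral_mult_right[symmetric])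
      (simp add: integral_combination continuous_intros)
qed

lemma integral_legendre_legendre_neq:
  assumes "k \<noteq> m"
  shows "integral {-1..1} (\<lambda>x. poly (legendre k) x * poly (legendre m) x) = 0"
proof -
  consider "m < k" | "k < m" using assms by linarith
  then show ?thesis
  proof cases
    case 1
    then show ?thesis
      using integral_legendre_orthogonal[of "legendre m" k] by (simp add: degree_legendre)
  next
    case 2
    then show ?thesis
      using integral_legendre_orthogonal[of "legendre k" m] by (simp add: degree_legendre mult.commute)
  qed
qed

lemma integral_legendre_square:
  "integral {-1..1} (\<lambda>x. poly (legendre k) x * poly (legendre k) x) = 2 / (2 * real k + 1)"
proof (induction k)
  case 0
  then show ?case by simp
next
  case (Suc k)
  let ?I = "integral {-1..1} (\<lambda>x. poly (legendre (Suc k)) x * poly (legendre (Suc k)) x)"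
  let ?X = "integral {-1..1} (\<lambda>x. x * poly (legendre (Suc k)) x * poly (legendre k) x)"
  have "?X = integral {-1..1} (\<lambda>x. x * poly (legendre k) x * poly (legendre (Suc k)) x)"
    by (simp add: mult_ac)
  then have I: "real (Suc k) * ?I = (2 * real k + 1) * ?X"
    using integral_x_legendre_legendre_rec[of k "Suc k"] integral_legendre_legendre_neq[of "k - 1" "Suc k"]
    by simp
  have X: "(2 * real (Suc k) + 1) * ?X = real (Suc k) * (2 / (2 * real k + 1))"
    using integral_x_legendre_legendre_rec[of "Suc k" k] integral_legendre_legendre_neq[of "Suc (Suc k)" k]
      Suc.IH by simp
  have "real (Suc k) * ((2 * real (Suc k) + 1) * ?I) = (2 * real (Suc k) + 1) * (real (Suc k) * ?I)"
    by simp
  also have "\<dots> = (2 * real k + 1) * ((2 * real (Suc k) + 1) * ?X)"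
    unfolding I by (simp only: mult.left_commute)
  also have "\<dots> = real (Suc k) * 2"
    unfolding X by simp
  finally have "(2 * real (Suc k) + 1) * ?I = 2"
    by (subst (asm) mult_left_cancel) simp_all
  then show ?case by (simp add: eq_divide_eq mult.commute)
qed

lemma integral_legendre_legendre:
  "integral {-1..1} (\<lambda>x. poly (legendre k) x * poly (legendre m) x)
     = (if k = m then 2 / (2 * real k + 1) else 0)"
  by (simp add: integral_legendre_square integral_legendre_legendre_neq)

lemma integral_x_legendre_legendre:
  "integral {-1..1} (\<lambda>x. x * poly (legendre l) x * poly (legendre m) x)
     = (if m = Suc l then 2 * real (l + 1) / ((2 * real l + 1) * (2 * real l + 3)) else 0)
       + (if l = Suc m then 2 * real (m + 1) / ((2 * real m + 1) * (2 * real m + 3)) else 0)"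
  (is "?X = _")
proof -
  have X: "(2 * real l + 1) * ?X
      = real (l + 1) * (if Suc l = m then 2 / (2 * real (Suc l) + 1) else 0)
        + real l * (if l - 1 = m then 2 / (2 * real m + 1) else 0)"
    unfolding integral_x_legendre_legendre_rec integral_legendre_legendre by simp
  consider "m = Suc l" | "l = Suc m" | "m \<noteq> Suc l" "l \<noteq> Suc m" by blast
  then show ?thesis
  proof cases
    case 1
    moreover have "l - 1 \<noteq> m" using 1 by simp
    ultimately have "(2 * real l + 1) * ?X = 2 * real (l + 1) / (2 * real l + 3)"
      using X by (simp add: add_ac)
    then show ?thesis using 1
      by (simp add: eq_divide_eq nonzero_eq_divide_eq mult.commute mult.left_commute)
  next
    case 2
    then have "(2 * real m + 3) * ?X = 2 * real (m + 1) / (2 * real m + 1)"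
      using X by (simp add: add_ac)
    then show ?thesis using 2
      by (simp add: eq_divide_eq nonzero_eq_divide_eq mult.commute mult.left_commute)
  next
    case 3
    then have "(2 * real l + 1) * ?X = 0" using X by (cases l) auto
    then show ?thesis using 3 by simp
  qed
qed

lemma sum_sum_if_eq_Suc:
  "(\<Sum>l\<le>n. \<Sum>m\<le>n. if m = Suc l then f l else 0) = (\<Sum>l<n. f l :: 'a::comm_monoid_add)"
proof -
  have "(\<Sum>l\<le>n. \<Sum>m\<le>n. if m = Suc l then f l else 0) = (\<Sum>l\<le>n. if Suc l \<le> n then f l else 0)"
    by (intro sum.cong) (simp_all add: sum.delta)
  also have "\<dots> = sum f {l \<in> {..n}. Suc l \<le> n}"
    by (rule sum.inter_filter[symmetric]) simp
  also have "{l \<in> {..n}. Suc l \<le> n} = {..<n}" by auto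
  finally show ?thesis .
qed

lemma integral_x_square_legendre_series:
  "integral {-1..1} (\<lambda>x. x * (\<Sum>l\<le>n. c l * poly (legendre l) x)^2)
     = (\<Sum>l<n. 4 * real (l + 1) / ((2 * real l + 1) * (2 * real l + 3)) * c l * c (Suc l))"
proof -
  define e where "e l = 2 * real (l + 1) / ((2 * real l + 1) * (2 * real l + 3))" for l
  have "(\<lambda>x. x * (\<Sum>l\<le>n. c l * poly (legendre l) x)^2)
      = (\<lambda>x. \<Sum>l\<le>n. \<Sum>m\<le>n. c l * c m * (x * poly (legendre l) x * poly (legendre m) x))"
    by (simp add: power2_eq_square sum_product sum_distrib_left algebra_simps)
  then have "integral {-1..1} (\<lambda>x. x * (\<Sum>l\<le>n. c l * poly (legendre l) x)^2)
      = (\<Sum>l\<le>n. \<Sum>m\<le>n. c l * c m * integral {-1..1} (\<lambda>x. x * poly (legendre l) x * poly (legendre m) x))"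
    by (simp add: integral_sum integrable_continuous_interval continuous_intros)
  also have "\<dots> = (\<Sum>l\<le>n. \<Sum>m\<le>n. if m = Suc l then c l * c (Suc l) * e l else 0)
      + (\<Sum>l\<le>n. \<Sum>m\<le>n. if l = Suc m then c m * c (Suc m) * e m else 0)"
    unfolding integral_x_legendre_legendre e_def sum.distrib[symmetric]
    by (intro sum.cong refl) (auto simp: algebra_simps)
  also have "(\<Sum>l\<le>n. \<Sum>m\<le>n. if l = Suc m then c m * c (Suc m) * e m else 0)
      = (\<Sum>m\<le>n. \<Sum>l\<le>n. if l = Suc m then c m * c (Suc m) * e m else 0)"
    by (rule sum.swap)
  also have "(\<Sum>l\<le>n. \<Sum>m\<le>n. if m = Suc l then c l * c (Suc l) * e l else 0)
      + (\<Sum>m\<le>n. \<Sum>l\<le>n. if l = Suc m then c m * c (Suc m) * e m else 0)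
      = (\<Sum>l<n. 2 * e l * c l * c (Suc l))"
    unfolding sum_sum_if_eq_Suc by (simp add: sum.distrib[symmetric] mult_ac)
  finally show ?thesis by (simp add: e_def)
qed

text \<open>
  The distance from the point t on the axis to the point of the unit sphere with axial
  coordinate x; axis_potential t p is the potential at t of the axially symmetric surface
  charge p(x) on the unit sphere, up to the factor 1 / (2 eps0).
\<close>

definition axis_dist :: "real \<Rightarrow> real \<Rightarrow> real" where
  "axis_dist t x = sqrt (1 + t^2 - 2 * t * x)"

definition axis_potential :: "real \<Rightarrow> real poly \<Rightarrow> real" where
  "axis_potential t p = integral {-1..1} (\<lambda>x. poly p x / axis_dist t x)"

lemma axis_dist_radicand_pos:
  fixes t x :: real
  assumes "0 < t" "t < 1" "x \<le> 1"
  shows "0 < 1 + t^2 - 2 * t * x"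
proof -
  have "t * x \<le> t" using assms by (simp add: mult_left_le)
  moreover have "0 < (1 - t)^2" using assms by simp
  ultimately show ?thesis by (simp add: power2_eq_square algebra_simps)
qed

lemma axis_dist_pos: "0 < t \<Longrightarrow> t < 1 \<Longrightarrow> x \<le> 1 \<Longrightarrow> 0 < axis_dist t x"
  unfolding axis_dist_def using axis_dist_radicand_pos by simp

lemma continuous_on_divide_axis_dist:
  assumes "0 < t" "t < 1" "continuous_on {-1..1} f"
  shows "continuous_on {-1..1} (\<lambda>x. f x / axis_dist t x)"
proof -
  have "continuous_on {-1..1} (axis_dist t)"
    unfolding axis_dist_def by (intro continuous_intros)
  then show ?thesis
    using assms axis_dist_pos[OF assms(1,2)] by (intro continuous_intros) force+
qed

lemma integrable_poly_divide_axis_dist: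
  "0 < t \<Longrightarrow> t < 1 \<Longrightarrow> (\<lambda>x. poly p x / axis_dist t x) integrable_on {-1..1}"
  by (intro integrable_continuous_interval continuous_on_divide_axis_dist continuous_intros)

lemma axis_potential_smult: "axis_potential t (smult c p) = c * axis_potential t p"
  unfolding axis_potential_def by (simp add: integral_mult_right[symmetric] del: integral_mult_right)

lemma axis_potential_sum:
  assumes "0 < t" "t < 1" "finite A"
  shows "axis_potential t (\<Sum>a\<in>A. f a) = (\<Sum>a\<in>A. axis_potential t (f a))"
  unfolding axis_potential_def poly_sum sum_divide_distrib
  using assms by (intro integral_sum integrable_poly_divide_axis_dist)

lemma axis_potential_add:
  "0 < t \<Longrightarrow> t < 1 \<Longrightarrow> axis_potential t (p + q) = axis_potential t p + axis_potential t q"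
  unfolding axis_potential_def poly_add add_divide_distrib
  by (intro integral_add integrable_poly_divide_axis_dist)

lemma axis_potential_diff:
  "0 < t \<Longrightarrow> t < 1 \<Longrightarrow> axis_potential t (p - q) = axis_potential t p - axis_potential t q"
  using axis_potential_add[of t p "smult (-1) q"] axis_potential_smult[of t "-1" q] by simp

lemma axis_potential_derivative_combination:
  assumes t: "0 < t" "t < 1"
  shows "axis_potential t (smult (1 + t^2) (pderiv Q) - smult t ([:0, 2:] * pderiv Q + Q))
       = poly Q 1 * (1 - t) - poly Q (-1) * (1 + t)"
proof -
  let ?G = "\<lambda>x. poly Q x * axis_dist t x"
  let ?g = "\<lambda>x. poly (smult (1 + t^2) (pderiv Q) - smult t ([:0, 2:] * pderiv Q + Q)) x / axis_dist t x"
  \<comment> \<open>The integrand is the derivative of ?G because the squared distance is affine in x.\<close>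
  have "(?G has_real_derivative ?g x) (at x within {-1..1})" if x: "x \<in> {-1..1}" for x
  proof -
    have radicand: "0 < 1 + t^2 - 2 * t * x" using axis_dist_radicand_pos t x by simp
    then have square_eq: "1 + t^2 = axis_dist t x * axis_dist t x + 2 * t * x"
      unfolding axis_dist_def by simp
    have pos: "0 < axis_dist t x" using axis_dist_pos t x by simp
    have "(axis_dist t has_real_derivative - t / axis_dist t x) (at x)"
      unfolding axis_dist_def using radicand
      by (auto intro!: derivative_eq_intros simp: divide_simps)
    then have derivative: "(?G has_real_derivative poly (pderiv Q) x * axis_dist t x + poly Q x * (- t / axis_dist t x)) (at x)"
      by (intro derivative_eq_intros) auto
    have "?g x = ((1 + t^2) * poly (pderiv Q) x - t * (2 * x * poly (pderiv Q) x + poly Q x))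
        / axis_dist t x"
      by (simp add: algebra_simps)
    also have "\<dots> = poly (pderiv Q) x * axis_dist t x + poly Q x * (- t / axis_dist t x)"
      using pos unfolding square_eq by (simp add: field_simps)
    finally show ?thesis using derivative by (auto intro: DERIV_subset)
  qed
  then have "(?g has_integral ?G 1 - ?G (-1)) {-1..1}"
    by (intro fundamental_theorem_of_calculus)
      (simp_all add: has_real_derivative_iff_has_vector_derivative[symmetric])
  moreover have "axis_dist t 1 = 1 - t" "axis_dist t (-1) = 1 + t"
  proof -
    have "1 + t^2 - 2 * t * 1 = (1 - t)^2" "1 + t^2 - 2 * t * (-1) = (1 + t)^2"
      by (simp_all add: power2_eq_square algebra_simps)
    then show "axis_dist t 1 = 1 - t" "axis_dist t (-1) = 1 + t"
      using t unfolding axis_dist_def by simp_all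
  qed
  ultimately show ?thesis unfolding axis_potential_def by (simp add: integral_unique)
qed

lemma axis_potential_one:
  assumes "0 < t" "t < 1"
  shows "axis_potential t 1 = 2"
proof -
  have "smult (1 + t^2) (pderiv 1) - smult t ([:0, 2:] * pderiv 1 + 1) = smult (-t) 1"
    by simp
  then have "axis_potential t (smult (-t) 1) = 1 * (1 - t) - 1 * (1 + t)"
    using axis_potential_derivative_combination[OF assms, of 1] by simp
  then show ?thesis using assms unfolding axis_potential_smult by simp
qed

lemma axis_potential_x:
  assumes "0 < t" "t < 1"
  shows "axis_potential t [:0, 1:] = 2 * t / 3"
proof -
  have "smult (1 + t^2) (pderiv [:0, 1:]) - smult t ([:0, 2:] * pderiv [:0, 1:] + [:0, 1:])
      = smult (1 + t^2) 1 - smult (3 * t) [:0, 1:]"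
    by (simp add: pderiv_pCons)
  then have "axis_potential t (smult (1 + t^2) 1 - smult (3 * t) [:0, 1:]) = 1 * (1 - t) - (-1) * (1 + t)"
    using axis_potential_derivative_combination[OF assms, of "[:0, 1:]"] by simp
  then have "(1 + t^2) * 2 - 3 * t * axis_potential t [:0, 1:] = 2"
    unfolding axis_potential_diff[OF assms] axis_potential_smult axis_potential_one[OF assms]
    by simp
  then show ?thesis using assms by (simp add: field_simps power2_eq_square)
qed

lemma legendre_derivative_combination:
  fixes t :: real and n :: nat
  defines "Q \<equiv> legendre (Suc (Suc n)) - legendre n"
  shows "smult (1 + t^2) (pderiv Q) - smult t ([:0, 2:] * pderiv Q + Q)
     = smult ((1 + t^2) * (2 * real n + 3)) (legendre (Suc n))
       - smult (t * (2 * real n + 5)) (legendre (Suc (Suc n)))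
       - smult (t * (2 * real n + 1)) (legendre n)"
proof (rule poly_ext)
  fix x
  have Q': "poly (pderiv Q) x = (2 * real n + 3) * poly (legendre (Suc n)) x"
    unfolding Q_def using pderiv_legendre_diff[of n x] by (simp add: pderiv_diff)
  have "(2 * real n + 3) * x * poly (legendre (Suc n)) x
      = (real n + 2) * poly (legendre (Suc (Suc n))) x + (real n + 1) * poly (legendre n) x"
    using legendre_rec[of n x] by simp
  then have Q: "2 * x * poly (pderiv Q) x + poly Q x
      = (2 * real n + 5) * poly (legendre (Suc (Suc n))) x + (2 * real n + 1) * poly (legendre n) x"
    unfolding Q' unfolding Q_def by (simp add: algebra_simps)
  have "poly (smult (1 + t^2) (pderiv Q) - smult t ([:0, 2:] * pderiv Q + Q)) x
      = (1 + t^2) * poly (pderiv Q) x - t * (2 * x * poly (pderiv Q) x + poly Q x)"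
    by (simp add: algebra_simps)
  also have "\<dots> = (1 + t^2) * ((2 * real n + 3) * poly (legendre (Suc n)) x)
      - t * ((2 * real n + 5) * poly (legendre (Suc (Suc n))) x + (2 * real n + 1) * poly (legendre n) x)"
    unfolding Q unfolding Q' ..
  also have "\<dots> = poly (smult ((1 + t^2) * (2 * real n + 3)) (legendre (Suc n))
      - smult (t * (2 * real n + 5)) (legendre (Suc (Suc n)))
      - smult (t * (2 * real n + 1)) (legendre n)) x"
    by (simp add: algebra_simps)
  finally show "poly (smult (1 + t^2) (pderiv Q) - smult t ([:0, 2:] * pderiv Q + Q)) x
      = poly (smult ((1 + t^2) * (2 * real n + 3)) (legendre (Suc n))
          - smult (t * (2 * real n + 5)) (legendre (Suc (Suc n)))
          - smult (t * (2 * real n + 1)) (legendre n)) x" .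
qed

lemma axis_potential_legendre_rec:
  assumes "0 < t" "t < 1"
  shows "t * (2 * real n + 5) * axis_potential t (legendre (Suc (Suc n)))
     = (1 + t^2) * (2 * real n + 3) * axis_potential t (legendre (Suc n))
       - t * (2 * real n + 1) * axis_potential t (legendre n)"
proof -
  let ?Q = "legendre (Suc (Suc n)) - legendre n"
  have "poly ?Q 1 = 0" "poly ?Q (-1) = 0"
    by (simp_all add: poly_legendre_one poly_legendre_minus_one)
  then have "axis_potential t (smult ((1 + t^2) * (2 * real n + 3)) (legendre (Suc n))
        - smult (t * (2 * real n + 5)) (legendre (Suc (Suc n)))
        - smult (t * (2 * real n + 1)) (legendre n)) = 0"
    using axis_potential_derivative_combination[OF assms, of ?Q]
    unfolding legendre_derivative_combination by simp
  then show ?thesis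
    unfolding axis_potential_diff[OF assms] axis_potential_smult by (simp add: algebra_simps)
qed

lemma axis_potential_legendre:
  assumes "0 < t" "t < 1"
  shows "axis_potential t (legendre m) = 2 * t ^ m / (2 * real m + 1)"
proof (induction m rule: legendre.induct)
  case (3 n)
  have A: "(2 * real n + 3) * axis_potential t (legendre (Suc n)) = 2 * t ^ Suc n"
    and C: "(2 * real n + 1) * axis_potential t (legendre n) = 2 * t ^ n"
    using 3 by (simp_all add: field_simps)
  have "t * ((2 * real n + 5) * axis_potential t (legendre (Suc (Suc n))))
      = (1 + t^2) * ((2 * real n + 3) * axis_potential t (legendre (Suc n)))
        - t * ((2 * real n + 1) * axis_potential t (legendre n))"
    using axis_potential_legendre_rec[OF assms, of n] by (simp only: mult.assoc)
  also have "\<dots> = t * (2 * t ^ Suc (Suc n))"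
    unfolding A C by (simp add: algebra_simps power2_eq_square)
  finally have "(2 * real n + 5) * axis_potential t (legendre (Suc (Suc n))) = 2 * t ^ Suc (Suc n)"
    using assms by simp
  then show ?case using assms by (simp add: field_simps)
qed (simp_all add: assms axis_potential_one axis_potential_x)

lemma polyfun_eq_0_on_interval:
  fixes c :: "nat \<Rightarrow> real"
  assumes "a < b" and "\<And>t. a < t \<Longrightarrow> t < b \<Longrightarrow> (\<Sum>i\<le>n. c i * t ^ i) = 0" and "i \<le> n"
  shows "c i = 0"
proof -
  define p where "p = (\<Sum>i\<le>n. monom (c i) i)"
  have poly_p: "poly p t = (\<Sum>i\<le>n. c i * t ^ i)" for t
    unfolding p_def by (simp add: poly_sum poly_monom)
  have "p = 0"
  proof (rule ccontr)
    assume "p \<noteq> 0"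
    then have "finite {t. poly p t = 0}" by (rule poly_roots_finite)
    moreover have "{a<..<b} \<subseteq> {t. poly p t = 0}" using assms(2) poly_p by auto
    ultimately show False using infinite_Ioo[OF \<open>a < b\<close>] finite_subset by blast
  qed
  then show ?thesis
    using coeff_sum_monom[OF \<open>i \<le> n\<close>, of c] unfolding p_def by simp
qed

lemma legendre_series_of_axis_potential:
  assumes "degree p \<le> n"
    and "\<And>t. 0 < t \<Longrightarrow> t < 1 \<Longrightarrow> axis_potential t p = (\<Sum>l\<le>n. a l * t ^ l)"
  shows "p = (\<Sum>l\<le>n. smult ((2 * real l + 1) / 2 * a l) (legendre l))"
proof -
  obtain c where c: "p = (\<Sum>l\<le>n. smult (c l) (legendre l))"
    using legendre_expansion[OF assms(1)] by blast
  have vanish: "(\<Sum>l\<le>n. (2 / (2 * real l + 1) * c l - a l) * t ^ l) = 0" if "0 < t" "t < 1" for t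
  proof -
    have "axis_potential t p = (\<Sum>l\<le>n. c l * (2 * t ^ l / (2 * real l + 1)))"
      unfolding c using that by (simp add: axis_potential_sum axis_potential_smult axis_potential_legendre)
    also have "\<dots> = (\<Sum>l\<le>n. 2 / (2 * real l + 1) * c l * t ^ l)"
      by (intro sum.cong) simp_all
    finally show ?thesis
      unfolding left_diff_distrib sum_subtractf using assms(2)[OF that] by simp
  qed
  have "2 / (2 * real l + 1) * c l - a l = 0" if "l \<le> n" for l
    using polyfun_eq_0_on_interval[where c = "\<lambda>l. 2 / (2 * real l + 1) * c l - a l",
        OF zero_less_one vanish that] .
  then have coeff: "c l = (2 * real l + 1) / 2 * a l" if "l \<le> n" for l
    using that by (simp add: field_simps)
  show ?thesis unfolding c by (rule sum.cong) (simp_all add: coeff)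
qed

lemma integral_symmetric_interval_stretch:
  fixes f :: "real \<Rightarrow> real"
  assumes "0 < r"
  shows "integral {-r..r} f = r * integral {-1..1} (\<lambda>x. f (r * x))"
proof -
  have "(\<lambda>x. x / r) ` {-r..r} = {-1..1}" using assms by simp
  then have "integral {-1..1} (\<lambda>x. f (r * x)) = (1 / \<bar>r\<bar>) *\<^sub>R integral {-r..r} f"
    using integral_stretch_real[where m = r and f = f and a = "-r" and b = r] assms by simp
  then show ?thesis using assms by simp
qed

lemma integral_sphere_kernel_rescale:
  assumes "0 < r" "0 < t" "t < 1"
  shows "integral {-r..r} (\<lambda>z. r * poly p z / sqrt ((r * t)^2 + r^2 - 2 * (r * t) * z))
     = r * axis_potential t (p \<circ>\<^sub>p [:0, r:])"
proof -
  have "r * poly p (r * x) / sqrt ((r * t)^2 + r^2 - 2 * (r * t) * (r * x))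
      = poly (p \<circ>\<^sub>p [:0, r:]) x / axis_dist t x" for x
  proof -
    have "(r * t)^2 + r^2 - 2 * (r * t) * (r * x) = r^2 * (1 + t^2 - 2 * t * x)"
      by (simp add: power2_eq_square algebra_simps)
    then have "sqrt ((r * t)^2 + r^2 - 2 * (r * t) * (r * x)) = r * axis_dist t x"
      using assms unfolding axis_dist_def by (simp add: real_sqrt_mult)
    moreover have "poly (p \<circ>\<^sub>p [:0, r:]) x = poly p (r * x)"
      by (simp add: poly_pcompose mult.commute)
    ultimately show ?thesis using assms by simp
  qed
  then show ?thesis
    unfolding integral_symmetric_interval_stretch[OF assms(1)] axis_potential_def by simp
qed

lemma charge_legendre_series:
  fixes r eps0 :: real and b :: "nat \<Rightarrow> real" and phi0 :: "real \<Rightarrow> real" and sig :: "real poly"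
  assumes r: "0 < r" and "degree sig \<le> n"
    and phi0: "\<forall>s. -r < s \<and> s < r \<longrightarrow> - phi0 s = (\<Sum>i=1..n+1. b i * s ^ (i - 1))"
    and charge: "\<forall>s. -r < s \<and> s < r \<longrightarrow>
          integral {-r..r} (\<lambda>z. r * poly sig z / sqrt (s^2 + r^2 - 2 * s * z)) = - 2 * eps0 * phi0 s"
  shows "sig \<circ>\<^sub>p [:0, r:]
     = (\<Sum>l\<le>n. smult ((2 * real l + 1) / 2 * (2 * eps0 * r ^ l / r * b (l + 1))) (legendre l))"
proof (rule legendre_series_of_axis_potential)
  show "degree (sig \<circ>\<^sub>p [:0, r:]) \<le> n" using assms(2) r by (simp add: degree_pcompose)
next
  fix t :: real
  assume t: "0 < t" "t < 1"
  have s: "-r < r * t" "r * t < r" using r t by (auto intro: less_trans[of _ 0] simp: mult_less_cancel_left_pos)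
  have "r * axis_potential t (sig \<circ>\<^sub>p [:0, r:]) = 2 * eps0 * (- phi0 (r * t))"
    using charge s integral_sphere_kernel_rescale[OF r t, of sig] by simp
  also have "- phi0 (r * t) = (\<Sum>i=1..n+1. b i * (r * t) ^ (i - 1))"
    using phi0 s by blast
  also have "\<dots> = (\<Sum>l\<le>n. b (l + 1) * r ^ l * t ^ l)"
    by (simp add: atLeast0AtMost[symmetric] sum.shift_bounds_cl_Suc_ivl power_mult_distrib mult.assoc
        del: sum.cl_ivl_Suc)
  finally show "axis_potential t (sig \<circ>\<^sub>p [:0, r:]) = (\<Sum>l\<le>n. 2 * eps0 * r ^ l / r * b (l + 1) * t ^ l)"
    using r by (simp add: sum_distrib_left field_simps flip: sum_divide_distrib)
qed

lemma ball_force_legendre_series: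
  assumes r: "0 < r" and sig: "sig \<circ>\<^sub>p [:0, r:] = (\<Sum>l\<le>n. smult (c l) (legendre l))"
  shows "ball_force r eps0 (poly sig)
     = pi / eps0 * r^2 * (\<Sum>l<n. 4 * real (l + 1) / ((2 * real l + 1) * (2 * real l + 3)) * c l * c (Suc l))"
proof -
  have integrand: "(\<lambda>x. r * x * (poly sig (r * x))^2) = (\<lambda>x. r * (x * (poly (sig \<circ>\<^sub>p [:0, r:]) x)^2))"
    by (simp add: poly_pcompose mult_ac)
  have "ball_force r eps0 (poly sig)
      = pi / eps0 * r^2 * integral {-1..1} (\<lambda>x. x * (poly (sig \<circ>\<^sub>p [:0, r:]) x)^2)"
    unfolding ball_force_def integral_symmetric_interval_stretch[OF r] integrand
    by (simp add: power2_eq_square)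
  then show ?thesis
    using integral_x_square_legendre_series[of c n] unfolding sig by (simp add: poly_sum)
qed

lemma ball_force_summand:
  fixes r eps0 :: real and b :: "nat \<Rightarrow> real"
  assumes r: "0 < r" and eps0: "0 < eps0"
  defines "c \<equiv> \<lambda>l. (2 * real l + 1) / 2 * (2 * eps0 * r ^ l / r * b (l + 1))"
  shows "pi / eps0 * r^2 * (4 * real (l + 1) / ((2 * real l + 1) * (2 * real l + 3)) * c l * c (Suc l))
     = 4 * pi * eps0 * (real (Suc l) * r ^ (2 * Suc l - 1) * b (Suc l) * b (Suc l + 1))"
proof -
  define D where "D = (2 * real l + 1) * (2 * real l + 3)"
  define P where "P = eps0^2 * (r ^ l * r ^ Suc l) / r^2 * b (Suc l) * b (Suc l + 1)"
  have "c l * c (Suc l) = D * P"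
    unfolding c_def D_def P_def using r by (simp add: field_simps power2_eq_square)
  moreover have "D \<noteq> 0" unfolding D_def by simp
  ultimately have "4 * real (l + 1) / D * c l * c (Suc l) = 4 * real (l + 1) * P"
    by (simp add: mult.assoc)
  then have "pi / eps0 * r^2 * (4 * real (l + 1) / D * c l * c (Suc l))
      = pi / eps0 * r^2 * (4 * real (l + 1) * P)"
    by simp
  also have "\<dots> = 4 * pi * eps0 * (real (Suc l) * r ^ (2 * Suc l - 1) * b (Suc l) * b (Suc l + 1))"
  proof -
    have "r ^ l * r ^ Suc l = r ^ (2 * Suc l - 1)"
      by (simp add: power_add[symmetric] mult_2)
    then show ?thesis using r eps0 unfolding P_def by (simp add: field_simps power2_eq_square)
  qed
  finally show ?thesis unfolding D_def .
qed

theorem theorem3: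
  fixes r eps0 :: real and n :: nat and b :: "nat \<Rightarrow> real"
    and phi0 :: "real \<Rightarrow> real" and sig :: "real poly"
  assumes "r > 0" and "eps0 > 0" and "n \<ge> 1"
    and "\<forall>s. -r < s \<and> s < r \<longrightarrow> - phi0 s = (\<Sum>i=1..n+1. b i * s ^ (i - 1))"
    and "b (n + 1) \<noteq> 0"
    and "degree sig \<le> n"
    and "\<forall>s. -r < s \<and> s < r \<longrightarrow>
          integral {-r..r} (\<lambda>z. r * poly sig z / sqrt (s^2 + r^2 - 2 * s * z))
            = - 2 * eps0 * phi0 s"
  shows "ball_force r eps0 (poly sig)
           = 4 * pi * eps0 * (\<Sum>i=1..n. real i * r ^ (2 * i - 1) * b i * b (i + 1))"
proof -
  have "ball_force r eps0 (poly sig) = pi / eps0 * r^2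
      * (\<Sum>l<n. 4 * real (l + 1) / ((2 * real l + 1) * (2 * real l + 3))
          * ((2 * real l + 1) / 2 * (2 * eps0 * r ^ l / r * b (l + 1)))
          * ((2 * real (Suc l) + 1) / 2 * (2 * eps0 * r ^ Suc l / r * b (Suc l + 1))))"
    using ball_force_legendre_series[OF \<open>r > 0\<close> charge_legendre_series[OF \<open>r > 0\<close> assms(6,4,7)]] .
  also have "\<dots> = 4 * pi * eps0 * (\<Sum>l<n. real (Suc l) * r ^ (2 * Suc l - 1) * b (Suc l) * b (Suc l + 1))"
    unfolding sum_distrib_left
    using ball_force_summand[OF \<open>r > 0\<close> \<open>eps0 > 0\<close>, of _ b] by simp
  also have "\<dots> = 4 * pi * eps0 * (\<Sum>i=1..n. real i * r ^ (2 * i - 1) * b i * b (i + 1))"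
    by (simp add: sum.atLeast1_atMost_eq)
  finally show ?thesis .
qed

end
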